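(* Let $\Sigma$ be an alphabet, $\triangleleft\notin\Sigma$, and let $L\subseteq\Sigma^*$ be context-free. Then the language $$\mathrm{Next}(L)=\bigcup_{n\in\mathbb N}\bigl\{\langle\sigma_2,\sigma_1\rangle\cdots\langle\sigma_n,\sigma_{n-1}\rangle\langle\triangleleft,\sigma_n\rangle \;\big|\; \sigma_1,\dots,\sigma_n\in\Sigma,\ \sigma_1\cdots\sigma_n\in L\bigr\}$$ over the alphabet $(\Sigma\cup\{\triangleleft\})\times\Sigma$ is context-free. *)

theory Defs
  imports Main
begin

text \<open>A symbol is Inl A (nonterminal) or Inr a (terminal).\<close>

type_synonym ('n, 't) prods = "('n \<times> ('n + 't) list) set"

inductive derives1 :: "('n, 't) prods \<Rightarrow> ('n + 't) list \<Rightarrow> ('n + 't) list \<Rightarrow> bool"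
  for P where
  step: "(A, alpha) \<in> P \<Longrightarrow> derives1 P (u @ [Inl A] @ w) (u @ alpha @ w)"

definition derives :: "('n, 't) prods \<Rightarrow> ('n + 't) list \<Rightarrow> ('n + 't) list \<Rightarrow> bool" where
  "derives P = (derives1 P)\<^sup>*\<^sup>*"

definition lang :: "('n, 't) prods \<Rightarrow> 'n \<Rightarrow> 't list set" where
  "lang P S = {w. derives P [Inl S] (map Inr w)}"

text \<open>A language is context-free if it is generated by some finite grammar;
  nonterminals are taken to be natural numbers (no loss of generality).\<close>
definition context_free :: "'t list set \<Rightarrow> bool" where
  "context_free L \<longleftrightarrow> (\<exists>(P :: (nat, 't) prods) S. finite P \<and> L = lang P S)"

text \<open>Next(L): for a nonempty word s1...sn, the word <s2,s1>...<sn,s(n-1)><tri,sn>.\<close>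
definition next_word :: "'a \<Rightarrow> 'a list \<Rightarrow> ('a \<times> 'a) list" where
  "next_word tri w = zip (tl w @ [tri]) w"

definition Next :: "'a \<Rightarrow> 'a list set \<Rightarrow> ('a \<times> 'a) list set" where
  "Next tri L = {next_word tri w | w. w \<in> L \<and> w \<noteq> []}"

end

theory Submission
  imports Defs
begin

text \<open>A nonterminal \<open>(A, a, b)\<close> of the new grammar generates \<open>next_word b w\<close> for the words
  \<open>w\<close> derived from \<open>A\<close>, where \<open>a\<close> is the first letter of \<open>w\<close> and \<open>b\<close> the letter that
  follows \<open>w\<close> (so \<open>a = b\<close> if \<open>w\<close> is empty). A production \<open>A \<rightarrow> X\<^sub>1 \<dots> X\<^sub>k\<close> is simulated
  by guessing the letters \<open>a = c\<^sub>0, c\<^sub>1, \<dots>, c\<^sub>k = b\<close> that follow the subwords generated by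
  \<open>X\<^sub>1, \<dots>, X\<^sub>k\<close>; a nonterminal \<open>X\<^sub>i = B\<close> becomes \<open>(B, c\<^sub>i\<^sub>-\<^sub>1, c\<^sub>i)\<close> and a terminal \<open>X\<^sub>i = t\<close>
  forces \<open>c\<^sub>i\<^sub>-\<^sub>1 = t\<close> and becomes the letter \<open>\<langle>c\<^sub>i, t\<rangle>\<close>. Only the terminals of the grammar
  and \<open>\<triangleleft>\<close> can be guessed, so the grammar is finite. A new start symbol picks
  \<open>(S, a, \<triangleleft>)\<close> with \<open>a \<in> \<Sigma>\<close>, which excludes the empty word because \<open>\<triangleleft> \<notin> \<Sigma>\<close>.\<close>

subsection \<open>Parse trees and derivations\<close>

inductive gen_sym :: "('n, 't) prods \<Rightarrow> 'n + 't \<Rightarrow> 't list \<Rightarrow> bool"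
  and gen_syms :: "('n, 't) prods \<Rightarrow> ('n + 't) list \<Rightarrow> 't list \<Rightarrow> bool"
  for P where
  gen_Tm: "gen_sym P (Inr t) [t]"
| gen_Nt: "(A, al) \<in> P \<Longrightarrow> gen_syms P al w \<Longrightarrow> gen_sym P (Inl A) w"
| gen_Nil: "gen_syms P [] []"
| gen_Cons: "gen_sym P X u \<Longrightarrow> gen_syms P xs v \<Longrightarrow> gen_syms P (X # xs) (u @ v)"

inductive_cases gen_syms_NilE: "gen_syms P [] w"
inductive_cases gen_syms_ConsE: "gen_syms P (X # xs) w"
inductive_cases gen_sym_InrE: "gen_sym P (Inr t) w"
inductive_cases gen_sym_InlE: "gen_sym P (Inl A) w"

lemma gen_syms_append_iff:
  "gen_syms P (xs @ ys) w \<longleftrightarrow> (\<exists>u v. w = u @ v \<and> gen_syms P xs u \<and> gen_syms P ys v)"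
proof (induction xs arbitrary: w)
  case Nil
  then show ?case by (auto intro: gen_Nil elim: gen_syms_NilE)
next
  case (Cons X xs)
  show ?case
  proof
    assume "gen_syms P ((X # xs) @ ys) w"
    then obtain u v where "w = u @ v" "gen_sym P X u" "gen_syms P (xs @ ys) v"
      by (auto elim: gen_syms_ConsE)
    moreover from this(3) obtain v1 v2 where "v = v1 @ v2" "gen_syms P xs v1" "gen_syms P ys v2"
      using Cons by blast
    ultimately show "\<exists>u v. w = u @ v \<and> gen_syms P (X # xs) u \<and> gen_syms P ys v"
      by (metis append.assoc gen_Cons)
  next
    assume "\<exists>u v. w = u @ v \<and> gen_syms P (X # xs) u \<and> gen_syms P ys v"
    then obtain u v1 v2 where "w = (u @ v1) @ v2" "gen_sym P X u" "gen_syms P xs v1" "gen_syms P ys v2"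
      by (auto elim: gen_syms_ConsE)
    then show "gen_syms P ((X # xs) @ ys) w"
      using Cons by (metis append.assoc append_Cons gen_Cons)
  qed
qed

lemma gen_syms_singleton_iff: "gen_syms P [X] w \<longleftrightarrow> gen_sym P X w"
  by (metis append_Nil2 gen_Cons gen_syms_ConsE gen_Nil gen_syms_NilE)

lemma gen_syms_map_Inr: "gen_syms P (map Inr w) w"
  by (induction w) (auto intro: gen_Nil gen_Cons[of _ _ "[_]", simplified] gen_Tm)

lemma derives1_append_context: "derives1 P u v \<Longrightarrow> derives1 P (x @ u @ y) (x @ v @ y)"
  by (induction rule: derives1.induct) (metis append.assoc derives1.step)

lemma derives_append_context: "derives P u v \<Longrightarrow> derives P (x @ u @ y) (x @ v @ y)"
  unfolding derives_def
  by (induction rule: rtranclp_induct) (auto intro: rtranclp.rtrancl_into_rtrancl derives1_append_context)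

lemma derives_append: "derives P u u' \<Longrightarrow> derives P v v' \<Longrightarrow> derives P (u @ v) (u' @ v')"
  using derives_append_context[of P u u' "[]" v] derives_append_context[of P v v' u' "[]"]
  unfolding derives_def by simp

lemma gen_sym_derives:
  "gen_sym P X w \<Longrightarrow> derives P [X] (map Inr w)"
  "gen_syms P xs w \<Longrightarrow> derives P xs (map Inr w)"
proof (induction rule: gen_sym_gen_syms.inducts)
  case (gen_Nt A al w)
  have "derives1 P ([] @ [Inl A] @ []) ([] @ al @ [])"
    using gen_Nt(1) by (rule derives1.step)
  with gen_Nt(3) show ?case unfolding derives_def by simp
next
  case (gen_Cons X u xs v)
  then show ?case using derives_append by fastforce
qed (simp_all add: derives_def)

lemma derives_gen_syms: "derives P xs (map Inr w) \<Longrightarrow> gen_syms P xs w"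
  unfolding derives_def
proof (induction rule: converse_rtranclp_induct)
  case base
  then show ?case by (rule gen_syms_map_Inr)
next
  case (step ys zs)
  from step(1) show ?case
  proof cases
    case (step A al u v)
    from \<open>gen_syms P zs w\<close> obtain w1 w2 w3 where
      w: "w = w1 @ w2 @ w3" "gen_syms P u w1" "gen_syms P al w2" "gen_syms P v w3"
      by (auto simp: step gen_syms_append_iff)
    have "gen_sym P (Inl A) w2"
      using step(3) w(3) by (rule gen_Nt)
    then have "gen_syms P (Inl A # v) (w2 @ w3)"
      using w(4) by (rule gen_Cons)
    with w show ?thesis
      by (auto simp: step gen_syms_append_iff)
  qed
qed

lemma lang_eq_gen_sym: "lang P S = {w. gen_sym P (Inl S) w}"
  unfolding lang_def using derives_gen_syms gen_sym_derives gen_syms_singleton_iff by blast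

subsection \<open>Renaming nonterminals\<close>

definition nts :: "('n, 't) prods \<Rightarrow> 'n set" where
  "nts P = fst ` P \<union> (\<Union>(A, al)\<in>P. Inl -` set al)"

definition rename_prods :: "('n \<Rightarrow> 'm) \<Rightarrow> ('n, 't) prods \<Rightarrow> ('m, 't) prods" where
  "rename_prods f P = (\<lambda>(A, al). (f A, map (map_sum f id) al)) ` P"

lemma finite_nts: "finite P \<Longrightarrow> finite (nts P)"
  unfolding nts_def by (auto intro: finite_vimageI inj_Inl)

lemma rename_prods_comp: "rename_prods g (rename_prods f P) = rename_prods (g \<circ> f) P"
  unfolding rename_prods_def by (force simp: sum.map_comp)

lemma rename_prods_id:
  assumes "\<And>A. A \<in> nts P \<Longrightarrow> f A = A"
  shows "rename_prods f P = P"
proof -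
  have "(f A, map (map_sum f id) al) = (A, al)" if "(A, al) \<in> P" for A al
  proof -
    have "map (map_sum f id) al = al"
    proof (rule map_idI)
      fix X assume "X \<in> set al"
      show "map_sum f id X = X"
      proof (cases X)
        case (Inl B)
        with \<open>X \<in> set al\<close> that have "B \<in> nts P"
          unfolding nts_def by fastforce
        with Inl assms show ?thesis by simp
      qed simp
    qed
    moreover have "A \<in> nts P"
      using that unfolding nts_def by (simp add: rev_image_eqI)
    ultimately show ?thesis
      using assms by simp
  qed
  then have "rename_prods f P = id ` P"
    unfolding rename_prods_def by (intro image_cong) auto
  then show ?thesis by simp
qed

lemma gen_sym_rename_prods:
  "gen_sym P X w \<Longrightarrow> gen_sym (rename_prods f P) (map_sum f id X) w"
  "gen_syms P xs w \<Longrightarrow> gen_syms (rename_prods f P) (map (map_sum f id) xs) w"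
proof (induction rule: gen_sym_gen_syms.inducts)
  case (gen_Nt A al w)
  have "(f A, map (map_sum f id) al) \<in> rename_prods f P"
    using gen_Nt(1) unfolding rename_prods_def by force
  from gen_sym_gen_syms.gen_Nt[OF this gen_Nt(3)] show ?case by simp
qed (simp_all add: gen_sym_gen_syms.intros)

lemma lang_rename_prods:
  assumes "inj_on f (insert S (nts P))"
  shows "lang (rename_prods f P) (f S) = lang P S"
proof -
  txt \<open>Renaming back with the inverse of \<open>f\<close> recovers \<open>P\<close>, so the converse inclusion
    also follows from the forward direction.\<close>
  define g where "g = inv_into (insert S (nts P)) f"
  have "rename_prods g (rename_prods f P) = P"
    unfolding rename_prods_comp g_def using assms by (intro rename_prods_id) simp
  then have "gen_sym (rename_prods f P) (Inl (f S)) w \<Longrightarrow> gen_sym P (Inl S) w" for w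
    using gen_sym_rename_prods(1)[of "rename_prods f P" "Inl (f S)" w g] assms
    by (simp add: g_def)
  then show ?thesis
    unfolding lang_eq_gen_sym using gen_sym_rename_prods(1)[of P "Inl S" _ f] by force
qed

lemma context_free_lang:
  fixes P :: "('n, 't) prods"
  assumes "finite P"
  shows "context_free (lang P S)"
proof -
  obtain f :: "'n \<Rightarrow> nat" where "inj_on f (insert S (nts P))"
    using finite_imp_inj_to_nat_seg[of "insert S (nts P)"] finite_nts[OF assms] by auto
  moreover have "finite (rename_prods f P)"
    unfolding rename_prods_def using assms by simp
  ultimately show ?thesis
    unfolding context_free_def using lang_rename_prods by metis
qed

subsection \<open>The grammar for \<open>Next\<close>\<close>

lemma next_word_Nil [simp]: "next_word b [] = []"
  by (simp add: next_word_def)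

lemma next_word_Cons [simp]: "next_word b (a # w) = (hd (w @ [b]), a) # next_word b w"
  by (cases w) (simp_all add: next_word_def)

lemma next_word_append: "next_word b (u @ v) = next_word (hd (v @ [b])) u @ next_word b v"
  by (induction u) (simp_all add: hd_append)

definition terminals :: "('n, 't) prods \<Rightarrow> 't set" where
  "terminals P = (\<Union>(A, al)\<in>P. Inr -` set al)"

lemma finite_terminals: "finite P \<Longrightarrow> finite (terminals P)"
  unfolding terminals_def by (auto intro: finite_vimageI inj_Inr)

lemma gen_sym_set_subset:
  "gen_sym P X w \<Longrightarrow> set w \<subseteq> terminals P \<union> {t. X = Inr t}"
  "gen_syms P xs w \<Longrightarrow> set w \<subseteq> terminals P \<union> Inr -` set xs"
proof (induction rule: gen_sym_gen_syms.inducts)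
  case (gen_Nt A al w)
  have "Inr -` set al \<subseteq> terminals P"
    using gen_Nt(1) unfolding terminals_def by blast
  with gen_Nt(3) show ?case by blast
qed auto

inductive next_rhs :: "'t set \<Rightarrow> ('n + 't) list \<Rightarrow> 't \<Rightarrow> 't \<Rightarrow>
    (('n \<times> 't \<times> 't) option + 't \<times> 't) list \<Rightarrow> bool"
  for G where
  next_rhs_Nil: "next_rhs G [] a a []"
| next_rhs_Nt: "c \<in> G \<Longrightarrow> next_rhs G xs c b beta \<Longrightarrow>
    next_rhs G (Inl B # xs) a b (Inl (Some (B, a, c)) # beta)"
| next_rhs_Tm: "c \<in> G \<Longrightarrow> next_rhs G xs c b beta \<Longrightarrow>
    next_rhs G (Inr a # xs) a b (Inr (c, a) # beta)"

definition next_prods :: "'t set \<Rightarrow> ('n, 't) prods \<Rightarrow> (('n \<times> 't \<times> 't) option, 't \<times> 't) prods" where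
  "next_prods G P = {(Some (A, a, b), beta) | A al a b beta.
     (A, al) \<in> P \<and> a \<in> G \<and> b \<in> G \<and> next_rhs G al a b beta}"

definition Next_prods :: "'t set \<Rightarrow> 't \<Rightarrow> ('n, 't) prods \<Rightarrow> 'n \<Rightarrow>
    (('n \<times> 't \<times> 't) option, 't \<times> 't) prods" where
  "Next_prods Sig tri P S = next_prods (insert tri (terminals P)) P
     \<union> (\<lambda>a. (None, [Inl (Some (S, a, tri))])) ` Sig"

lemma finite_next_rhs: "finite G \<Longrightarrow> finite {beta. next_rhs G al a b beta}"
proof (induction al arbitrary: a)
  case Nil
  have "{beta. next_rhs G [] a b beta} \<subseteq> {[]}"
    by (auto elim: next_rhs.cases)
  then show ?case by (rule finite_subset) simp
next
  case (Cons X xs)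
  let ?head = "\<lambda>c. case X of Inl B \<Rightarrow> Inl (Some (B, a, c)) | Inr t \<Rightarrow> Inr (c, t)"
  have "{beta. next_rhs G (X # xs) a b beta}
      \<subseteq> (\<Union>c\<in>G. (\<lambda>beta. ?head c # beta) ` {beta. next_rhs G xs c b beta})"
  proof
    fix beta assume "beta \<in> {beta. next_rhs G (X # xs) a b beta}"
    then have "next_rhs G (X # xs) a b beta" by simp
    then show "beta \<in> (\<Union>c\<in>G. (\<lambda>beta. ?head c # beta) ` {beta. next_rhs G xs c b beta})"
      by cases auto
  qed
  then show ?case
    by (rule finite_subset) (simp add: Cons)
qed

lemma finite_next_prods:
  assumes "finite G" "finite P"
  shows "finite (next_prods G P)"
proof -
  have "next_prods G P = (\<Union>p\<in>P. \<Union>a\<in>G. \<Union>b\<in>G.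
      Pair (Some (fst p, a, b)) ` {beta. next_rhs G (snd p) a b beta})"
    unfolding next_prods_def by force
  then show ?thesis
    using assms by (simp add: finite_next_rhs)
qed

lemma finite_Next_prods: "finite Sig \<Longrightarrow> finite P \<Longrightarrow> finite (Next_prods Sig tri P S)"
  unfolding Next_prods_def by (simp add: finite_next_prods finite_terminals)

lemma gen_sym_next_prods_sound:
  assumes "\<And>x beta. (Some x, beta) \<in> Q \<Longrightarrow> (Some x, beta) \<in> next_prods G P"
  shows "gen_sym Q Y v \<Longrightarrow> Y = Inl (Some (A, a, b)) \<Longrightarrow>
      \<exists>w. gen_sym P (Inl A) w \<and> hd (w @ [b]) = a \<and> v = next_word b w"
    and "gen_syms Q beta v \<Longrightarrow> next_rhs G al a b beta \<Longrightarrow>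
      \<exists>w. gen_syms P al w \<and> hd (w @ [b]) = a \<and> v = next_word b w"
proof (induction arbitrary: A a b and al a b rule: gen_sym_gen_syms.inducts)
  case (gen_Nt X beta v)
  then obtain al where "(A, al) \<in> P" "next_rhs G al a b beta"
    using assms unfolding next_prods_def by blast
  with gen_Nt(3) show ?case
    by (blast intro: gen_sym_gen_syms.gen_Nt)
next
  case gen_Nil
  then have "al = [] \<and> a = b"
    by (auto elim: next_rhs.cases)
  then show ?case
    by (auto intro: gen_sym_gen_syms.gen_Nil)
next
  case (gen_Cons X u xs v)
  from gen_Cons(5) show ?case
  proof cases
    case (next_rhs_Nt c al' B)
    obtain w1 where w1: "gen_sym P (Inl B) w1" "hd (w1 @ [c]) = a" "u = next_word c w1"
      using gen_Cons(2) next_rhs_Nt by blast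
    obtain w2 where w2: "gen_syms P al' w2" "hd (w2 @ [b]) = c" "v = next_word b w2"
      using gen_Cons(4) next_rhs_Nt by blast
    have "gen_syms P al (w1 @ w2)"
      using next_rhs_Nt(1) w1(1) w2(1) by (simp add: gen_sym_gen_syms.gen_Cons)
    moreover have "hd ((w1 @ w2) @ [b]) = a"
      using w1(2) w2(2) by (cases w1) auto
    moreover have "u @ v = next_word b (w1 @ w2)"
      using w1(3) w2(2,3) by (simp add: next_word_append)
    ultimately show ?thesis by blast
  next
    case (next_rhs_Tm c al')
    have "u = [(c, a)]"
      using gen_Cons(1) next_rhs_Tm by (auto elim: gen_sym_InrE)
    obtain w2 where w2: "gen_syms P al' w2" "hd (w2 @ [b]) = c" "v = next_word b w2"
      using gen_Cons(4) next_rhs_Tm by blast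
    have "gen_syms P al (a # w2)"
      using next_rhs_Tm(1) gen_sym_gen_syms.gen_Cons[OF gen_Tm w2(1)] by simp
    moreover have "u @ v = next_word b (a # w2)"
      using \<open>u = [(c, a)]\<close> w2(2,3) by simp
    ultimately show ?thesis by auto
  qed
qed simp

lemma gen_sym_next_prods_complete:
  assumes "next_prods G P \<subseteq> Q" "terminals P \<subseteq> G"
  shows "gen_sym P X w \<Longrightarrow> X = Inl A \<Longrightarrow> b \<in> G \<Longrightarrow>
      gen_sym Q (Inl (Some (A, hd (w @ [b]), b))) (next_word b w)"
    and "gen_syms P al w \<Longrightarrow> b \<in> G \<Longrightarrow> set w \<subseteq> G \<Longrightarrow>
      \<exists>beta. next_rhs G al (hd (w @ [b])) b beta \<and> gen_syms Q beta (next_word b w)"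
proof (induction arbitrary: A b and b rule: gen_sym_gen_syms.inducts)
  case (gen_Nt A' al w)
  have "set w \<subseteq> G"
    using gen_sym_set_subset(1)[OF gen_sym_gen_syms.gen_Nt[OF gen_Nt(1,2)]] assms(2) by auto
  then obtain beta where beta: "next_rhs G al (hd (w @ [b])) b beta" "gen_syms Q beta (next_word b w)"
    using gen_Nt(3,5) by blast
  have "hd (w @ [b]) \<in> G"
    using \<open>set w \<subseteq> G\<close> gen_Nt(5) by (cases w) auto
  then have "(Some (A, hd (w @ [b]), b), beta) \<in> Q"
    using gen_Nt(1,4,5) beta(1) assms(1) unfolding next_prods_def by blast
  from this beta(2) show ?case
    by (rule gen_sym_gen_syms.gen_Nt)
next
  case gen_Nil
  show ?case
    using next_rhs_Nil gen_sym_gen_syms.gen_Nil by fastforce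
next
  case (gen_Cons X u xs v)
  define c where "c = hd (v @ [b])"
  have "c \<in> G"
    using gen_Cons(5,6) unfolding c_def by (cases v) auto
  have "set v \<subseteq> G"
    using gen_Cons(6) by simp
  with gen_Cons(4,5) obtain beta where
    beta: "next_rhs G xs c b beta" "gen_syms Q beta (next_word b v)"
    unfolding c_def by blast
  have next_word_uv: "next_word b (u @ v) = next_word c u @ next_word b v"
    unfolding c_def by (rule next_word_append)
  have hd_uv: "hd ((u @ v) @ [b]) = hd (u @ [c])"
    unfolding c_def by (cases u) auto
  show ?case
  proof (cases X)
    case (Inl B)
    have "gen_sym Q (Inl (Some (B, hd (u @ [c]), c))) (next_word c u)"
      using gen_Cons(2) Inl \<open>c \<in> G\<close> by blast
    with beta show ?thesis
      unfolding Inl next_word_uv hd_uv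
      by (blast intro: next_rhs_Nt[OF \<open>c \<in> G\<close>] gen_sym_gen_syms.gen_Cons)
  next
    case (Inr t)
    then have "u = [t]"
      using gen_Cons(1) by (auto elim: gen_sym_InrE)
    have "gen_syms Q (Inr (c, t) # beta) (next_word b (u @ v))"
      using gen_sym_gen_syms.gen_Cons[OF gen_Tm beta(2)] \<open>u = [t]\<close> c_def by simp
    with beta(1) show ?thesis
      unfolding Inr \<open>u = [t]\<close> by (auto intro: next_rhs_Tm[OF \<open>c \<in> G\<close>])
  qed
qed simp

lemma lang_Next_prods:
  assumes "tri \<notin> Sig" and "lang P S \<subseteq> lists Sig"
  shows "lang (Next_prods Sig tri P S) None = Next tri (lang P S)"
proof -
  let ?G = "insert tri (terminals P)" and ?Q = "Next_prods Sig tri P S"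
  have start_prods: "(None, beta) \<in> ?Q \<longleftrightarrow> (\<exists>a\<in>Sig. beta = [Inl (Some (S, a, tri))])" for beta
    unfolding Next_prods_def next_prods_def by auto
  have start: "gen_sym ?Q (Inl None) v \<longleftrightarrow> (\<exists>a\<in>Sig. gen_sym ?Q (Inl (Some (S, a, tri))) v)" for v
  proof
    assume "gen_sym ?Q (Inl None) v"
    then obtain beta where "(None, beta) \<in> ?Q" "gen_syms ?Q beta v"
      by (rule gen_sym_InlE)
    then show "\<exists>a\<in>Sig. gen_sym ?Q (Inl (Some (S, a, tri))) v"
      unfolding start_prods by (auto simp: gen_syms_singleton_iff)
  next
    assume "\<exists>a\<in>Sig. gen_sym ?Q (Inl (Some (S, a, tri))) v"
    then obtain a where "(None, [Inl (Some (S, a, tri))]) \<in> ?Q"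
        "gen_syms ?Q [Inl (Some (S, a, tri))] v"
      unfolding start_prods gen_syms_singleton_iff by blast
    then show "gen_sym ?Q (Inl None) v"
      by (rule gen_Nt)
  qed
  have sound: "(Some x, beta) \<in> next_prods ?G P" if "(Some x, beta) \<in> ?Q" for x beta
    using that unfolding Next_prods_def by blast
  have complete: "next_prods ?G P \<subseteq> ?Q" "terminals P \<subseteq> ?G"
    unfolding Next_prods_def by blast+
  have "gen_sym ?Q (Inl None) v \<longleftrightarrow> v \<in> Next tri (lang P S)" for v
  proof
    assume "gen_sym ?Q (Inl None) v"
    then obtain a where "a \<in> Sig" "gen_sym ?Q (Inl (Some (S, a, tri))) v"
      using start by blast
    then obtain w where w: "gen_sym P (Inl S) w" "hd (w @ [tri]) = a" "v = next_word tri w"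
      using gen_sym_next_prods_sound(1)[OF sound] by blast
    have "w \<noteq> []"
      using w(2) \<open>a \<in> Sig\<close> assms(1) by auto
    with w show "v \<in> Next tri (lang P S)"
      unfolding Next_def lang_eq_gen_sym by blast
  next
    assume "v \<in> Next tri (lang P S)"
    then obtain w where w: "v = next_word tri w" "gen_sym P (Inl S) w" "w \<noteq> []"
      unfolding Next_def lang_eq_gen_sym by blast
    have "hd (w @ [tri]) \<in> Sig"
      using w(2,3) assms(2) unfolding lang_eq_gen_sym by (cases w) auto
    moreover have "gen_sym ?Q (Inl (Some (S, hd (w @ [tri]), tri))) v"
      using gen_sym_next_prods_complete(1)[OF complete w(2) refl] w(1) by simp
    ultimately show "gen_sym ?Q (Inl None) v"
      using start by blast
  qed
  then show ?thesis
    unfolding lang_eq_gen_sym by blast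
qed

theorem lemma3p4:
  fixes Sigma :: "'a set" and tri :: 'a and L :: "'a list set"
  assumes "finite Sigma"
    and "tri \<notin> Sigma"
    and "L \<subseteq> lists Sigma"
    and "context_free L"
  shows "context_free (Next tri L)"
proof -
  obtain P :: "(nat, 'a) prods" and S where "finite P" and L: "L = lang P S"
    using assms(4) unfolding context_free_def by blast
  have "Next tri L = lang (Next_prods Sigma tri P S) None"
    using lang_Next_prods[of tri Sigma P S] assms(2,3) L by simp
  also have "context_free \<dots>"
    using finite_Next_prods[OF assms(1) \<open>finite P\<close>] by (rule context_free_lang)
  finally show ?thesis .
qed

end
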